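(* Let $p$ be a prime with $p\notin\{2,3,7,43\}$. Then $\mathcal{M}_p^{(2)}=\emptyset$.
   Context: For positive integers $k,n$ let $S_k(n)=\sum_{i=1}^{n} i^k$. For an integer $a$, $\mathcal{M}_a$ denotes the set of positive integers $n$ such that $S_n(n)\equiv a\pmod{n}$. For a prime $p$, $\mathcal{M}_p^{(2)}=\{n\in\mathcal{M}_p : p^2\mid n,\ p^3\nmid n\}$. *)

theory Defs
  imports "HOL-Number_Theory.Number_Theory"
begin

definition S :: "nat \<Rightarrow> nat \<Rightarrow> int" where
  "S k n = (\<Sum>i=1..n. (int i) ^ k)"

definition M :: "int \<Rightarrow> nat set" where
  "M a = {n. n > 0 \<and> [S n n = a] (mod (int n))}"

definition M2 :: "nat \<Rightarrow> nat set" where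
  "M2 p = {n \<in> M (int p). p^2 dvd n \<and> \<not> p^3 dvd n}"

end

theory Submission
  imports Defs "HOL-Computational_Algebra.Squarefree"
begin

text \<open>Let \<open>n \<in> M p\<close> with \<open>p\<^sup>2 dvd n\<close>. Splitting \<open>{1..n}\<close> into blocks of length \<open>q\<close> gives
  \<open>S n n \<equiv> (n div q) * S n q (mod q)\<close>, and even modulo \<open>q\<^sup>2\<close> after one further splitting when
  \<open>q\<^sup>2 dvd n\<close>; moreover \<open>q dvd S n q\<close> for a prime \<open>q\<close> unless \<open>q - 1 dvd n\<close>. As \<open>S n n \<equiv> p\<close>,
  this forces \<open>q - 1 dvd n\<close> for every prime \<open>q dvd n\<close> (using \<open>p\<^sup>2 dvd n\<close> for \<open>q = p\<close>),
  and \<open>r\<^sup>2 dvd n\<close> is impossible for every prime \<open>r \<noteq> p\<close>. By induction on \<open>q\<close>, every prime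
  divisor \<open>q\<close> of such an \<open>n\<close> has a squarefree \<open>q - 1\<close> built from the primes \<open>2, 3, 7, 43\<close>,
  so \<open>q \<in> {2, 3, 7, 43}\<close>; applied to \<open>q = p\<close> this is a contradiction.\<close>

lemma S_eq_sum_int: "S k n = (\<Sum>x\<in>{1..int n}. x ^ k)"
  using sum.atLeast_int_atMost_int_shift[of "\<lambda>x. x ^ k" 1 n] by (simp add: S_def comp_def)

lemma S_add: "S k (a + b) = S k a + (\<Sum>i=1..b. int (a + i) ^ k)"
proof (induction b)
  case (Suc b)
  have "S k (a + Suc b) = S k (a + b) + int (a + Suc b) ^ k"
    by (simp add: S_def add.commute)
  with Suc show ?case by (simp add: ac_simps)
qed simp

lemma S_mult_cong:
  assumes periodic: "\<And>c i. [int (c * d + i) ^ k = int i ^ k] (mod m)"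
  shows "[S k (c * d) = int c * S k d] (mod m)"
proof (induction c)
  case (Suc c)
  have "S k (Suc c * d) = S k (c * d) + (\<Sum>i=1..d. int (c * d + i) ^ k)"
    using S_add[of k "c * d" d] by (simp add: add.commute)
  moreover have "[(\<Sum>i=1..d. int (c * d + i) ^ k) = S k d] (mod m)"
    unfolding S_def by (intro cong_sum periodic)
  ultimately have "[S k (Suc c * d) = int c * S k d + S k d] (mod m)"
    using Suc cong_add by metis
  then show ?case by (simp add: algebra_simps)
qed (simp add: S_def)

lemma S_mult_cong_mod: "[S k (c * d) = int c * S k d] (mod int d)"
proof (rule S_mult_cong)
  fix c i
  have "[int (c * d + i) = int i] (mod int d)"
    by (simp add: cong_iff_dvd_diff)
  then show "[int (c * d + i) ^ k = int i ^ k] (mod int d)"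
    by (rule cong_pow)
qed

lemma power_add_mult_cong_square:
  fixes x y :: int and q k :: nat
  assumes "q dvd k"
  shows "[(x + int q * y) ^ k = x ^ k] (mod (int q)^2)"
proof -
  have "(x + int q * y) ^ k = x ^ k + (\<Sum>j\<in>{1..k}. of_nat (k choose j) * (int q * y) ^ j * x ^ (k - j))"
  proof -
    have "{..k} = insert 0 {1..k}" by auto
    then show ?thesis
      using binomial_ring[of "int q * y" x k] by (simp add: add.commute)
  qed
  moreover have "(int q)^2 dvd (\<Sum>j\<in>{1..k}. of_nat (k choose j) * (int q * y) ^ j * x ^ (k - j))"
  proof (rule dvd_sum)
    fix j assume j: "j \<in> {1..k}"
    show "(int q)^2 dvd of_nat (k choose j) * (int q * y) ^ j * x ^ (k - j)"
    proof (cases "j = 1")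
      case True
      have "(int q)^2 dvd int k * int q * (y * x ^ (k - 1))"
        using assms by (simp add: power2_eq_square)
      moreover have "of_nat (k choose j) * (int q * y) ^ j * x ^ (k - j) = int k * int q * (y * x ^ (k - 1))"
        using True by (simp add: algebra_simps)
      ultimately show ?thesis by simp
    next
      case False
      with j have "(int q)^2 dvd (int q)^j"
        by (intro le_imp_power_dvd) auto
      also have "\<dots> dvd (int q * y) ^ j"
        by (simp add: power_mult_distrib)
      finally show ?thesis
        by (rule dvd_mult2[OF dvd_mult])
    qed
  qed
  ultimately show ?thesis
    unfolding cong_iff_dvd_diff by simp
qed

lemma S_mult_cong_mod_square:
  assumes "q dvd k"
  shows "[S k (c * q) = int c * S k q] (mod (int q)^2)"
proof (rule S_mult_cong)
  fix c i
  have "int (c * q + i) = int i + int q * int c" by simp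
  then show "[int (c * q + i) ^ k = int i ^ k] (mod (int q)^2)"
    by (simp only: power_add_mult_cong_square[OF assms])
qed

text \<open>Multiplication by \<open>a\<close> permutes the nonzero residues, so the power sum \<open>T\<close> satisfies
  \<open>T \<equiv> a^k T\<close>.\<close>

lemma dvd_sum_powers_residues:
  fixes a m :: int
  assumes "coprime a m" and "coprime (a ^ k - 1) m"
  shows "m dvd (\<Sum>x\<in>{1..<m}. x ^ k)"
proof -
  define T where "T = (\<Sum>x\<in>{1..<m}. x ^ k)"
  have "T = (\<Sum>x\<in>{1..<m}. (a * x mod m) ^ k)"
    unfolding T_def
    using sum.reindex_bij_betw[OF bij_betw_int_remainders_mult[OF assms(1)], of "\<lambda>x. x ^ k"]
    by simp
  also have "[\<dots> = (\<Sum>x\<in>{1..<m}. (a * x) ^ k)] (mod m)"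
    by (intro cong_sum cong_pow) (simp add: cong_def)
  also have "(\<Sum>x\<in>{1..<m}. (a * x) ^ k) = a ^ k * T"
    by (simp add: T_def sum_distrib_left power_mult_distrib)
  finally have "[a ^ k * T = T] (mod m)"
    by (rule cong_sym)
  then have "m dvd (a ^ k - 1) * T"
    by (simp add: cong_iff_dvd_diff left_diff_distrib)
  with assms(2) show ?thesis
    unfolding T_def by (simp add: coprime_commute coprime_dvd_mult_right_iff)
qed

lemma prime_dvd_S_prime:
  assumes q: "prime q" and k: "\<not> (q - 1) dvd k"
  shows "int q dvd S k q"
proof -
  obtain g where "residue_primroot q g"
    using prime_primitive_root_exists[OF prime_gt_1_nat[OF q] q] by blast
  then have ord_g: "ord q g = q - 1" and "coprime q g"
    using q by (auto simp: residue_primroot_def totient_prime)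
  then have "coprime (int g) (int q)"
    by (simp add: coprime_commute)
  moreover have "\<not> int q dvd int g ^ k - 1"
  proof
    assume "int q dvd int g ^ k - 1"
    then have "[g ^ k = 1] (mod q)"
      by (metis cong_iff_dvd_diff cong_int_iff of_nat_1 of_nat_power)
    with ord_g k show False
      by (simp add: ord_divides')
  qed
  then have "coprime (int g ^ k - 1) (int q)"
    using q by (simp add: prime_imp_coprime coprime_commute)
  ultimately have "int q dvd (\<Sum>x\<in>{1..<int q}. x ^ k)"
    by (rule dvd_sum_powers_residues)
  moreover have "S k q = (\<Sum>x\<in>{1..<int q}. x ^ k) + int q ^ k"
  proof -
    have "{1..int q} = insert (int q) {1..<int q}"
      using prime_gt_0_nat[OF q] by auto
    then show ?thesis
      by (simp add: S_eq_sum_int)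
  qed
  moreover have "k > 0"
    using k by (intro Nat.gr0I) simp
  ultimately show ?thesis
    by simp
qed

lemma M_cong_divisor: "n \<in> M a \<Longrightarrow> d dvd n \<Longrightarrow> [S n n = a] (mod int d)"
  unfolding M_def by (auto elim: cong_dvd_modulus)

lemma M_prime_divisor_pred_dvd:
  assumes n: "n \<in> M a" and q: "prime q" "q dvd n" and "\<not> int q dvd a"
  shows "(q - 1) dvd n"
proof (rule ccontr)
  assume "\<not> (q - 1) dvd n"
  then have "int q dvd S n q"
    by (rule prime_dvd_S_prime[OF q(1)])
  moreover obtain c where "n = c * q"
    using q(2) by (metis dvdE mult.commute)
  then have "[S n n = int c * S n q] (mod int q)"
    using S_mult_cong_mod[of n c q] by simp
  ultimately have "int q dvd S n n"
    by (simp add: cong_dvd_iff)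
  with M_cong_divisor[OF n q(2)] \<open>\<not> int q dvd a\<close> show False
    by (simp add: cong_dvd_iff)
qed

lemma M_prime_square_divisor_pred_dvd:
  assumes n: "n \<in> M a" and q: "prime q" "q^2 dvd n" and "\<not> (int q)^2 dvd a"
  shows "(q - 1) dvd n"
proof (rule ccontr)
  assume "\<not> (q - 1) dvd n"
  then have "int q dvd S n q"
    by (rule prime_dvd_S_prime[OF q(1)])
  then have "(int q)^2 dvd int q * S n q"
    by (simp add: power2_eq_square)
  moreover have "q dvd n"
    using q(2) by (simp add: power2_eq_square dvd_mult_left)
  then have "[S n (q * q) = int q * S n q] (mod (int q)^2)"
    by (rule S_mult_cong_mod_square)
  ultimately have "(int q)^2 dvd S n (q * q)"
    by (simp add: cong_dvd_iff)
  moreover obtain c where "n = c * (q * q)"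
    using q(2) by (metis dvdE mult.commute power2_eq_square)
  then have "[S n n = int c * S n (q * q)] (mod (int q)^2)"
    using S_mult_cong_mod[of n c "q * q"] by (simp add: power2_eq_square)
  ultimately have "(int q)^2 dvd S n n"
    by (simp add: cong_dvd_iff)
  with M_cong_divisor[OF n q(2)] \<open>\<not> (int q)^2 dvd a\<close> show False
    by (simp add: cong_dvd_iff)
qed

lemma M_square_divisor_dvd:
  assumes n: "n \<in> M a" and "d^2 dvd n"
  shows "int d dvd a"
proof -
  obtain c where c: "n = (c * d) * d"
    using assms(2) by (metis dvdE mult.assoc mult.commute power2_eq_square)
  then have "[S n n = int (c * d) * S n d] (mod int d)"
    using S_mult_cong_mod[of n "c * d" d] by simp
  then have "int d dvd S n n"
    by (simp add: cong_dvd_iff)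
  moreover have "d dvd n"
    using c by simp
  ultimately show ?thesis
    using M_cong_divisor[OF n] cong_dvd_iff by blast
qed

section \<open>Sylvester's numbers \<open>2, 3, 7, 43\<close>\<close>

lemma prod_prime_factors_squarefree_nat:
  assumes "squarefree (m :: nat)"
  shows "\<Prod>(prime_factors m) = m"
proof -
  have "m > 0"
    using assms by (auto intro: Nat.gr0I)
  then have "m = (\<Prod>p\<in>prime_factors m. p ^ multiplicity p m)"
    by (rule prime_factorization_nat)
  also have "\<dots> = \<Prod>(prime_factors m)"
    using assms \<open>m > 0\<close> by (intro prod.cong) (auto simp: squarefree_factorial_semiring')
  finally show ?thesis ..
qed

text \<open>Each of \<open>2, 3, 7, 43\<close> is one plus the product of its predecessors, and the list stops
  because \<open>2 * 3 * 7 * 43 + 1 = 1807 = 13 * 139\<close> is composite.\<close>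

lemma prime_Suc_prod_Sylvester:
  fixes d :: nat
  assumes "prime (d + 1)" and "d \<in> Prod ` Pow {2, 3, 7, 43}"
  shows "d + 1 \<in> {2, 3, 7, 43}"
proof -
  have "Prod ` Pow {2, 3, 7, 43 :: nat} = {1, 2, 3, 6, 7, 14, 21, 42, 43, 86, 129, 258, 301, 602, 903, 1806}"
    by (simp add: Pow_insert image_Un image_image insert_commute)
  with assms(2) have "d + 1 \<in> {2, 3, 7, 43} \<or> (\<exists>r\<in>{2, 3, 7, 13}. r dvd d + 1 \<and> r \<noteq> d + 1)"
    by auto
  moreover have "prime r" if "r \<in> {2, 3, 7, 13 :: nat}" for r
    using that by auto
  ultimately show ?thesis
    using assms(1) primes_dvd_imp_eq by blast
qed

lemma prime_divisor_in_Sylvester: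
  fixes n :: nat
  assumes pred: "\<And>q. prime q \<Longrightarrow> q dvd n \<Longrightarrow> (q - 1) dvd n"
    and square: "\<And>r. prime r \<Longrightarrow> r \<in> {2, 3, 7, 43} \<Longrightarrow> \<not> r^2 dvd n"
  shows "prime q \<Longrightarrow> q dvd n \<Longrightarrow> q \<in> {2, 3, 7, 43}"
proof (induction q rule: less_induct)
  case (less q)
  define d where "d = q - 1"
  have "d dvd n"
    using pred less.prems by (simp add: d_def)
  have "d \<noteq> 0" and q: "q = d + 1"
    using prime_gt_1_nat[OF less.prems(1)] by (auto simp: d_def)
  have small: "r \<in> {2, 3, 7, 43}" if "prime r" "r dvd d" for r
  proof (rule less.IH)
    show "r < q"
      using dvd_imp_le[OF \<open>r dvd d\<close>] \<open>d \<noteq> 0\<close> q by simp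
    show "r dvd n"
      using \<open>r dvd d\<close> \<open>d dvd n\<close> by (rule dvd_trans)
  qed fact
  have "squarefree d"
    unfolding squarefree_factorial_semiring[OF \<open>d \<noteq> 0\<close>]
  proof (intro allI impI notI)
    fix r :: nat
    assume r: "prime r" "r^2 dvd d"
    then have "r dvd d"
      by (simp add: power2_eq_square dvd_mult_left)
    with r square[of r] small[of r] dvd_trans[OF r(2) \<open>d dvd n\<close>] show False
      by blast
  qed
  moreover have "prime_factors d \<subseteq> {2, 3, 7, 43}"
    using small by (auto simp: in_prime_factors_iff)
  ultimately have "d \<in> Prod ` Pow {2, 3, 7, 43}"
    by (metis PowI image_eqI prod_prime_factors_squarefree_nat)
  with less.prems(1) show ?case
    unfolding q by (rule prime_Suc_prod_Sylvester)
qed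

theorem mainTheorem6:
  fixes p :: nat
  assumes "prime p" and "p \<notin> {2, 3, 7, 43}"
  shows "M2 p = {}"
proof -
  have False if "n \<in> M2 p" for n
  proof -
    from that have n: "n \<in> M (int p)" and "p^2 dvd n"
      by (auto simp: M2_def)
    have "(q - 1) dvd n" if q: "prime q" "q dvd n" for q
    proof (cases "q = p")
      case True
      have "\<not> (int p)^2 dvd int p"
        using prime_gt_1_nat[OF assms(1)] by (simp add: power2_eq_square)
      with True n q(1) \<open>p^2 dvd n\<close> show ?thesis
        by (blast intro: M_prime_square_divisor_pred_dvd)
    next
      case False
      then have "\<not> int q dvd int p"
        using primes_dvd_imp_eq[OF q(1) assms(1)] by auto
      with n q show ?thesis
        by (rule M_prime_divisor_pred_dvd)
    qed
    moreover have "\<not> r^2 dvd n" if "prime r" "r \<in> {2, 3, 7, 43}" for r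
      using M_square_divisor_dvd[OF n, of r] primes_dvd_imp_eq[OF \<open>prime r\<close> assms(1)] that assms(2)
      by auto
    moreover have "p dvd n"
      using \<open>p^2 dvd n\<close> by (simp add: power2_eq_square dvd_mult_left)
    ultimately have "p \<in> {2, 3, 7, 43}"
      using prime_divisor_in_Sylvester assms(1) by blast
    with assms(2) show False ..
  qed
  then show ?thesis
    by blast
qed

end
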